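(* Consider the latent class MNL pricing model of the context. Then: (i) $\bar{\mathcal{R}}\le\beta_e\,\mathcal{R}^e\le\beta_e\,\mathcal{R}^*$, with no further conditions, where $\beta_e$ is $\beta_f$ for $f=e=(1,\dots,1)$. (ii) If for each $j\in M$ the price sensitivities $b_{kj}=b_j$ do not depend on $k\in N$, then the economic factor and the robust factor are both proportional to $e$ (so pricing along either is equivalent to uniform pricing). (iii) For every vector $f$ with positive components such that $d^j(\bar p^j)'f\le\min_{i\in N}f_i$ for all $j\in M$, we have $\bar{\mathcal{R}}\le\beta_f\,\mathcal{R}^f\le\beta_f\,\mathcal{R}^*$.
   Context: Products $N=\{1,\dots,n\}$, customer types $M=\{1,\dots,m\}$ with weights $\theta_j>0$, $\sum_j\theta_j=1$. For type $j$, with parameters $a_{ij}\in\mathbb{R}$ and $b_{ij}>0$, the demand for product $i$ at price vector $p$ is $$d_{ij}(p)=\frac{\exp(a_{ij}-b_{ij}p_i)}{1+\sum_{k\in N}\exp(a_{kj}-b_{kj}p_k)},$$ $d^j(p)$ is the vector $(d_{ij}(p))_{i\in N}$, and $R_j(p)=\sum_ip_id_{ij}(p)$. Standing assumption (A0): each $R_j$ attains its maximum $\mathcal{R}^*_j$ over $p\ge 0$ at a price vector $\bar p^j=(\bar p_{ij})_i$ with positive finite components. $\bar{\mathcal{R}}:=\sum_j\theta_j\mathcal{R}^*_j$; $R(p):=\sum_j\theta_jR_j(p)$; $\mathcal{R}^*:=\max_{p\ge0}R(p)$; for positive $f$, $\mathcal{R}^f:=\max_{q>0}R(qf)$ and $\beta_f:=1+\ln(q_{\max}/q_{\min})$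 with $q_{\min}=\min_{i,j}\bar p_{ij}/f_i$, $q_{\max}=\max_{i,j}\bar p_{ij}/f_i$. The economic factor is $f=\sum_j\alpha_j\bar p^j$ with $\alpha_j=\theta_j\mathcal{R}^*_j/\bar{\mathcal{R}}$; the robust factor is $f^*_i=\sqrt{p^L_ip^H_i}$ where $p^H_i=\max_j\bar p_{ij}$, $p^L_i=\min_j\bar p_{ij}$. *)

theory Defs
  imports "HOL-Analysis.Analysis"
begin

text \<open>Products are indexed by a finite type 'i, customer types by a finite type 'j.
  a i j, b i j are the MNL parameters, p :: 'i \<Rightarrow> real a price vector.\<close>

definition demand :: "('i::finite \<Rightarrow> 'j \<Rightarrow> real) \<Rightarrow> ('i \<Rightarrow> 'j \<Rightarrow> real) \<Rightarrow> ('i \<Rightarrow> real) \<Rightarrow> 'i \<Rightarrow> 'j \<Rightarrow> real"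
  where "demand a b p i j =
    exp (a i j - b i j * p i) / (1 + (\<Sum>k\<in>UNIV. exp (a k j - b k j * p k)))"

definition revj :: "('i::finite \<Rightarrow> 'j \<Rightarrow> real) \<Rightarrow> ('i \<Rightarrow> 'j \<Rightarrow> real) \<Rightarrow> 'j \<Rightarrow> ('i \<Rightarrow> real) \<Rightarrow> real"
  where "revj a b j p = (\<Sum>i\<in>UNIV. p i * demand a b p i j)"

definition revtot :: "('j::finite \<Rightarrow> real) \<Rightarrow> ('i::finite \<Rightarrow> 'j \<Rightarrow> real) \<Rightarrow> ('i \<Rightarrow> 'j \<Rightarrow> real) \<Rightarrow> ('i \<Rightarrow> real) \<Rightarrow> real"
  where "revtot \<theta> a b p = (\<Sum>j\<in>UNIV. \<theta> j * revj a b j p)"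

definition Rbar :: "('j::finite \<Rightarrow> real) \<Rightarrow> ('i::finite \<Rightarrow> 'j \<Rightarrow> real) \<Rightarrow> ('i \<Rightarrow> 'j \<Rightarrow> real) \<Rightarrow> ('j \<Rightarrow> 'i \<Rightarrow> real) \<Rightarrow> real"
  where "Rbar \<theta> a b pbar = (\<Sum>j\<in>UNIV. \<theta> j * revj a b j (pbar j))"

definition Ropt :: "('j::finite \<Rightarrow> real) \<Rightarrow> ('i::finite \<Rightarrow> 'j \<Rightarrow> real) \<Rightarrow> ('i \<Rightarrow> 'j \<Rightarrow> real) \<Rightarrow> real"
  where "Ropt \<theta> a b = Sup {revtot \<theta> a b p | p. \<forall>i. 0 \<le> p i}"

definition Rfac :: "('j::finite \<Rightarrow> real) \<Rightarrow> ('i::finite \<Rightarrow> 'j \<Rightarrow> real) \<Rightarrow> ('i \<Rightarrow> 'j \<Rightarrow> real) \<Rightarrow> ('i \<Rightarrow> real) \<Rightarrow> real"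
  where "Rfac \<theta> a b f = Sup {revtot \<theta> a b (\<lambda>i. q * f i) | q::real. 0 < q}"

definition qmin :: "('j::finite \<Rightarrow> 'i::finite \<Rightarrow> real) \<Rightarrow> ('i \<Rightarrow> real) \<Rightarrow> real"
  where "qmin pbar f = Min {pbar j i / f i | i j. True}"

definition qmax :: "('j::finite \<Rightarrow> 'i::finite \<Rightarrow> real) \<Rightarrow> ('i \<Rightarrow> real) \<Rightarrow> real"
  where "qmax pbar f = Max {pbar j i / f i | i j. True}"

definition beta :: "('j::finite \<Rightarrow> 'i::finite \<Rightarrow> real) \<Rightarrow> ('i \<Rightarrow> real) \<Rightarrow> real"
  where "beta pbar f = 1 + ln (qmax pbar f / qmin pbar f)"

definition econ_factor :: "('j::finite \<Rightarrow> real) \<Rightarrow> ('i::finite \<Rightarrow> 'j \<Rightarrow> real) \<Rightarrow> ('i \<Rightarrow> 'j \<Rightarrow> real) \<Rightarrow> ('j \<Rightarrow> 'i \<Rightarrow> real) \<Rightarrow> 'i \<Rightarrow> real"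
  where "econ_factor \<theta> a b pbar i =
    (\<Sum>j\<in>UNIV. (\<theta> j * revj a b j (pbar j) / Rbar \<theta> a b pbar) * pbar j i)"

definition robust_factor :: "('j::finite \<Rightarrow> 'i \<Rightarrow> real) \<Rightarrow> 'i \<Rightarrow> real"
  where "robust_factor pbar i = sqrt ((MIN j. pbar j i) * (MAX j. pbar j i))"

end

theory Submission
  imports Defs
begin

text \<open>Fix a positive price direction f and put w(j,i) = \<theta>_j d_ij(pbar_j) f_i and t(j,i) = pbar_ji / f_i,
  so that Rbar = \<Sum> w(j,i) t(j,i) with every t(j,i) in [q_min, q_max]. For q > 0 the products with
  t(j,i) \<ge> q become cheaper when type j faces the prices q f instead of pbar_j; under
  d^j(pbar_j)'f \<le> min f their f-weighted demand at pbar_j is therefore at most the total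
  f-weighted demand at q f, hence
  q \<Sum>{w(j,i) | t(j,i) \<ge> q} \<le> R(q f) \<le> R^f. Integrating these tail bounds over q (layer-cake formula)
  gives Rbar \<le> (1 + ln (q_max / q_min)) R^f. For f = e the demand condition holds because total
  demand is below 1, and when b_ij does not depend on i the first-order condition
  pbar_ji = 1 / b_ij + R_j^* makes every pbar_j constant.\<close>

lemma has_integral_indicator_Icc_real:
  fixes L t H :: real
  assumes "L \<le> t" "t \<le> H"
  shows "((\<lambda>q. if q \<in> {L..t} then 1 else 0) has_integral (t - L)) {L..H}"
proof -
  have "((\<lambda>q. 1::real) has_integral (t - L)) (cbox L t)"
    using has_integral_const_real[of "1::real" L t] assms by simp
  then have "((\<lambda>q. if q \<in> cbox L t then 1 else 0) has_integral (t - L)) (cbox L H)"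
    by (rule has_integral_restrict_closed_subinterval) (use assms in auto)
  then show ?thesis by simp
qed

lemma has_integral_divide_real:
  fixes L H M :: real
  assumes "0 < L" "L \<le> H"
  shows "((\<lambda>q. M / q) has_integral M * ln (H / L)) {L..H}"
proof -
  have "((\<lambda>q. M / q) has_integral (M * ln H - M * ln L)) {L..H}"
  proof (rule fundamental_theorem_of_calculus[OF assms(2)])
    fix x :: real
    assume "x \<in> {L..H}"
    then have "0 < x" using assms by auto
    have "((\<lambda>q. M * ln q) has_real_derivative M * (1 / x)) (at x within {L..H})"
      by (rule derivative_eq_intros | use \<open>0 < x\<close> in auto)+
    then show "((\<lambda>q. M * ln q) has_vector_derivative M / x) (at x within {L..H})"
      by (simp add: has_real_derivative_iff_has_vector_derivative)
  qed
  then show ?thesis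
    using assms by (simp add: ln_div right_diff_distrib)
qed

text \<open>The sum is the integral over q of the tail sums, which are bounded by M/q on [L, H] and by
  M/L below L.\<close>
lemma layer_cake_log_bound:
  fixes w t :: "'k \<Rightarrow> real"
  assumes "finite K" "0 < L" "L \<le> H" and t_range: "\<forall>k\<in>K. L \<le> t k \<and> t k \<le> H"
    and tail: "\<And>q. 0 < q \<Longrightarrow> q * (\<Sum>k\<in>{k\<in>K. q \<le> t k}. w k) \<le> M"
  shows "(\<Sum>k\<in>K. w k * t k) \<le> M * (1 + ln (H / L))"
proof -
  have tails: "((\<lambda>q. \<Sum>k\<in>K. w k * (if q \<in> {L..t k} then 1 else 0))
      has_integral (\<Sum>k\<in>K. w k * (t k - L))) {L..H}"
    using t_range
    by (intro has_integral_sum \<open>finite K\<close> has_integral_mult_right has_integral_indicator_Icc_real) auto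
  have tail_le: "(\<Sum>k\<in>K. w k * (if q \<in> {L..t k} then 1 else 0)) \<le> M / q" if "q \<in> {L..H}" for q
  proof -
    have "(\<Sum>k\<in>K. w k * (if q \<in> {L..t k} then 1 else 0)) = (\<Sum>k\<in>{k\<in>K. q \<le> t k}. w k)"
      using that \<open>finite K\<close> by (simp add: sum.inter_filter[symmetric] if_distrib cong: if_cong)
    then show ?thesis
      using tail[of q] that \<open>0 < L\<close> by (simp add: field_simps)
  qed
  have upper: "(\<Sum>k\<in>K. w k * (t k - L)) \<le> M * ln (H / L)"
    using has_integral_le[OF tails has_integral_divide_real[OF \<open>0 < L\<close> \<open>L \<le> H\<close>] tail_le] .
  have "{k\<in>K. L \<le> t k} = K"
    using t_range by auto
  then have lower: "L * (\<Sum>k\<in>K. w k) \<le> M"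
    using tail[OF \<open>0 < L\<close>] by simp
  have "(\<Sum>k\<in>K. w k * t k) = L * (\<Sum>k\<in>K. w k) + (\<Sum>k\<in>K. w k * (t k - L))"
    by (simp add: sum_distrib_left algebra_simps sum.distrib[symmetric] sum_subtractf)
  also have "\<dots> \<le> M * (1 + ln (H / L))"
    using upper lower by (simp add: algebra_simps)
  finally show ?thesis .
qed

lemma demand_nonneg: "0 \<le> demand a b p i j"
  unfolding demand_def by (simp add: sum_nonneg add_pos_nonneg less_imp_le)

lemma sum_demand_le_1: "(\<Sum>i\<in>UNIV. demand a b p i j) \<le> 1"
proof -
  let ?E = "\<Sum>k\<in>UNIV. exp (a k j - b k j * p k)"
  have "0 \<le> ?E"
    by (simp add: sum_nonneg)
  moreover have "(\<Sum>i\<in>UNIV. demand a b p i j) = ?E / (1 + ?E)"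
    by (simp add: demand_def sum_divide_distrib)
  ultimately show ?thesis by simp
qed

text \<open>The excess \<Sum>(f i - r) * e i is at least r for e = e0 and grows when e increases on A;
  for e = e1 this is the claim in the form r * (1 + \<Sum> e1) \<le> \<Sum> f * e1.\<close>
lemma logit_share_le:
  fixes e0 e1 f :: "'i \<Rightarrow> real" and A I :: "'i set"
  defines "r \<equiv> (\<Sum>i\<in>A. f i * e0 i) / (1 + (\<Sum>i\<in>I. e0 i))"
  assumes "finite I" "A \<subseteq> I"
    and e0_nonneg: "\<forall>i\<in>I. 0 \<le> e0 i" and e1_nonneg: "\<forall>i\<in>I. 0 \<le> e1 i"
    and e0_le_e1: "\<forall>i\<in>A. e0 i \<le> e1 i"
    and "0 \<le> r" and r_le_f: "\<forall>i\<in>I. r \<le> f i"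
  shows "r \<le> (\<Sum>i\<in>I. f i * e1 i) / (1 + (\<Sum>i\<in>I. e1 i))"
proof -
  have E0: "0 \<le> (\<Sum>i\<in>I. e0 i)" and E1: "0 \<le> (\<Sum>i\<in>I. e1 i)"
    using e0_nonneg e1_nonneg by (auto intro: sum_nonneg)
  have "(\<Sum>i\<in>A. e0 i) \<le> (\<Sum>i\<in>I. e0 i)"
    using \<open>finite I\<close> \<open>A \<subseteq> I\<close> e0_nonneg by (intro sum_mono2) auto
  then have "r \<le> r * (1 + (\<Sum>i\<in>I. e0 i) - (\<Sum>i\<in>A. e0 i))"
    using \<open>0 \<le> r\<close> by (simp add: mult_le_cancel_left1)
  also have "\<dots> = (\<Sum>i\<in>A. (f i - r) * e0 i)"
  proof -
    have "r * (1 + (\<Sum>i\<in>I. e0 i)) = (\<Sum>i\<in>A. f i * e0 i)"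
      using E0 by (simp add: r_def)
    then show ?thesis
      by (simp add: algebra_simps sum_subtractf sum_distrib_left)
  qed
  also have "\<dots> \<le> (\<Sum>i\<in>A. (f i - r) * e1 i)"
    using \<open>A \<subseteq> I\<close> r_le_f e0_le_e1 by (intro sum_mono mult_left_mono) auto
  also have "\<dots> \<le> (\<Sum>i\<in>I. (f i - r) * e1 i)"
    using \<open>finite I\<close> \<open>A \<subseteq> I\<close> r_le_f e1_nonneg by (intro sum_mono2) auto
  finally have "r * (1 + (\<Sum>i\<in>I. e1 i)) \<le> (\<Sum>i\<in>I. f i * e1 i)"
    by (simp add: algebra_simps sum_subtractf sum_distrib_left)
  then show ?thesis
    using E1 by (simp add: field_simps)
qed

lemma revj_scaled_ge_cheaper_demand:
  fixes a b :: "'i::finite \<Rightarrow> 'j \<Rightarrow> real" and f p :: "'i \<Rightarrow> real"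
  assumes b_pos: "\<forall>i. 0 < b i j" and f_pos: "\<forall>i. 0 < f i"
    and demand_f: "(\<Sum>i\<in>UNIV. demand a b p i j * f i) \<le> (MIN i. f i)"
    and "0 < q"
  shows "q * (\<Sum>i | q * f i \<le> p i. f i * demand a b p i j) \<le> revj a b j (\<lambda>i. q * f i)"
proof -
  define e0 where "e0 i = exp (a i j - b i j * p i)" for i
  define e1 where "e1 i = exp (a i j - b i j * (q * f i))" for i
  define r where "r = (\<Sum>i | q * f i \<le> p i. f i * demand a b p i j)"
  have r_eq: "r = (\<Sum>i | q * f i \<le> p i. f i * e0 i) / (1 + (\<Sum>i\<in>UNIV. e0 i))"
    by (simp add: r_def demand_def e0_def sum_divide_distrib)
  have "0 \<le> r"
    unfolding r_def using f_pos by (intro sum_nonneg mult_nonneg_nonneg demand_nonneg less_imp_le) auto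
  have "r \<le> (\<Sum>i\<in>UNIV. f i * demand a b p i j)"
    unfolding r_def
    by (rule sum_mono2) (use f_pos in \<open>auto intro: mult_nonneg_nonneg demand_nonneg less_imp_le\<close>)
  also have "\<dots> \<le> (MIN i. f i)"
    using demand_f by (simp add: mult.commute)
  finally have r_le_f: "\<forall>i\<in>UNIV. r \<le> f i"
    by (meson Min_le finite UNIV_I finite_imageI image_eqI order_trans)
  have "\<forall>i\<in>{i. q * f i \<le> p i}. e0 i \<le> e1 i"
    using b_pos by (auto simp: e0_def e1_def intro: mult_left_mono less_imp_le)
  then have "r \<le> (\<Sum>i\<in>UNIV. f i * e1 i) / (1 + (\<Sum>i\<in>UNIV. e1 i))"
    using \<open>0 \<le> r\<close> r_le_f unfolding r_eq
    by (intro logit_share_le) (auto simp: e0_def e1_def)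
  then have "q * r \<le> q * ((\<Sum>i\<in>UNIV. f i * e1 i) / (1 + (\<Sum>i\<in>UNIV. e1 i)))"
    using \<open>0 < q\<close> by (intro mult_left_mono) auto
  also have "\<dots> = revj a b j (\<lambda>i. q * f i)"
    by (simp add: revj_def demand_def e1_def sum_divide_distrib sum_distrib_left algebra_simps)
  finally show ?thesis
    by (simp add: r_def)
qed

lemma revj_eq:
  "revj a b j p = (\<Sum>k\<in>UNIV. p k * exp (a k j - b k j * p k)) / (1 + (\<Sum>k\<in>UNIV. exp (a k j - b k j * p k)))"
  by (simp add: revj_def demand_def sum_divide_distrib)

lemma revj_fun_upd:
  fixes a b :: "'i::finite \<Rightarrow> 'j \<Rightarrow> real" and p :: "'i \<Rightarrow> real" and i :: 'i and j :: 'j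
  defines "C \<equiv> \<Sum>k\<in>UNIV - {i}. p k * exp (a k j - b k j * p k)"
    and "D \<equiv> \<Sum>k\<in>UNIV - {i}. exp (a k j - b k j * p k)"
  shows "revj a b j (p(i := t)) = (t * exp (a i j - b i j * t) + C) / (1 + exp (a i j - b i j * t) + D)"
proof -
  have "(\<Sum>k\<in>UNIV - {i}. (p(i := t)) k * exp (a k j - b k j * (p(i := t)) k)) = C"
    and "(\<Sum>k\<in>UNIV - {i}. exp (a k j - b k j * (p(i := t)) k)) = D"
    unfolding C_def D_def by (auto intro: sum.cong)
  then show ?thesis
    unfolding revj_eq sum.remove[OF finite UNIV_I, where x = i] by (simp add: add.assoc)
qed

lemma optimal_price_eq_markup:
  fixes a b :: "'i::finite \<Rightarrow> 'j \<Rightarrow> real"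
  assumes "0 < b i j" and p_pos: "\<forall>k. 0 < p k"
    and opt: "\<forall>p'. (\<forall>k. 0 \<le> p' k) \<longrightarrow> revj a b j p' \<le> revj a b j p"
  shows "p i = 1 / b i j + revj a b j p"
proof -
  define C where "C = (\<Sum>k\<in>UNIV - {i}. p k * exp (a k j - b k j * p k))"
  define D where "D = (\<Sum>k\<in>UNIV - {i}. exp (a k j - b k j * p k))"
  define g where "g t = (t * exp (a i j - b i j * t) + C) / (1 + exp (a i j - b i j * t) + D)" for t
  define x where "x = p i"
  define ex where "ex = exp (a i j - b i j * x)"
  define N where "N = 1 + ex + D"
  have "0 < x" "0 < ex"
    using p_pos by (simp_all add: x_def ex_def)
  moreover have "0 \<le> D"
    unfolding D_def by (simp add: sum_nonneg)
  ultimately have "0 < N"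
    by (simp add: N_def)
  have g_eq: "g t = revj a b j (p(i := t))" for t
    unfolding g_def C_def D_def by (rule revj_fun_upd[symmetric])
  have p_upd: "p(i := x) = p"
    by (simp add: x_def)
  have "(g has_real_derivative ex * ((1 - b i j * x) * N + b i j * (x * ex + C)) / N\<^sup>2) (at x)"
    unfolding g_def
    by (rule derivative_eq_intros refl | simp)+
       (use \<open>0 < N\<close> in \<open>auto simp: N_def ex_def power2_eq_square algebra_simps\<close>)
  moreover have "\<exists>d>0. \<forall>y. \<bar>x - y\<bar> < d \<longrightarrow> g y \<le> g x"
  proof (intro exI[of _ x] conjI allI impI)
    fix y
    assume "\<bar>x - y\<bar> < x"
    then have "\<forall>k. 0 \<le> (p(i := y)) k"
      using p_pos by (auto intro: less_imp_le)
    then show "g y \<le> g x"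
      unfolding g_eq p_upd using opt by blast
  qed (fact \<open>0 < x\<close>)
  ultimately have "ex * ((1 - b i j * x) * N + b i j * (x * ex + C)) / N\<^sup>2 = 0"
    by (metis DERIV_local_max)
  then have "(1 - b i j * x) * N + b i j * (x * ex + C) = 0"
    using \<open>0 < N\<close> \<open>0 < ex\<close> by simp
  then have "x = 1 / b i j + (x * ex + C) / N"
    using \<open>0 < N\<close> \<open>0 < ex\<close> \<open>0 < b i j\<close> by (simp add: field_simps)
  moreover have "revj a b j p = (x * ex + C) / N"
    using g_eq[of x] by (simp add: p_upd g_def N_def ex_def)
  ultimately show ?thesis
    by (simp add: x_def)
qed

lemma optimal_prices_eq_if_uniform_sensitivity:
  fixes a b :: "'i::finite \<Rightarrow> 'j \<Rightarrow> real"
  assumes "\<forall>i. 0 < b i j" and "\<forall>i k. b i j = b k j" and "\<forall>k. 0 < p k"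
    and "\<forall>p'. (\<forall>k. 0 \<le> p' k) \<longrightarrow> revj a b j p' \<le> revj a b j p"
  shows "p i = p k"
  using optimal_price_eq_markup[of b i j p a] optimal_price_eq_markup[of b k j p a] assms by metis

lemma revtot_le_Rbar:
  assumes "\<forall>j. 0 \<le> \<theta> j"
    and "\<forall>j p. (\<forall>i. 0 \<le> p i) \<longrightarrow> revj a b j p \<le> revj a b j (pbar j)"
    and "\<forall>i. 0 \<le> p i"
  shows "revtot \<theta> a b p \<le> Rbar \<theta> a b pbar"
  unfolding revtot_def Rbar_def using assms by (intro sum_mono mult_left_mono) auto

lemma bdd_above_revtot:
  assumes "\<forall>j. 0 \<le> \<theta> j"
    and "\<forall>j p. (\<forall>i. 0 \<le> p i) \<longrightarrow> revj a b j p \<le> revj a b j (pbar j)"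
  shows "bdd_above {revtot \<theta> a b p | p. \<forall>i. 0 \<le> p i}"
  using revtot_le_Rbar[OF assms] unfolding bdd_above_def by blast

lemma revtot_scaled_le_Rfac:
  assumes bdd: "bdd_above {revtot \<theta> a b p | p. \<forall>i. 0 \<le> p i}" and "\<forall>i. 0 \<le> f i" and "0 < q"
  shows "revtot \<theta> a b (\<lambda>i. q * f i) \<le> Rfac \<theta> a b f"
proof -
  have "bdd_above {revtot \<theta> a b (\<lambda>i. q * f i) | q. 0 < q}"
    by (rule bdd_above_mono[OF bdd]) (use assms(2) in auto)
  then show ?thesis
    unfolding Rfac_def using \<open>0 < q\<close> by (intro cSup_upper) auto
qed

lemma Rfac_le_Ropt:
  assumes "bdd_above {revtot \<theta> a b p | p. \<forall>i. 0 \<le> p i}" and "\<forall>i. 0 \<le> f i"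
  shows "Rfac \<theta> a b f \<le> Ropt \<theta> a b"
  unfolding Rfac_def Ropt_def using assms by (intro cSup_subset_mono) (auto intro: exI[of _ 1])

lemma finite_price_ratios:
  fixes pbar :: "'j::finite \<Rightarrow> 'i::finite \<Rightarrow> real" and f :: "'i \<Rightarrow> real"
  shows "finite {pbar j i / f i | i j. True}"
proof -
  have "{pbar j i / f i | i j. True} = range (\<lambda>(i, j). pbar j i / f i)"
    by auto
  then show ?thesis
    by simp
qed

lemma qmin_le: "qmin pbar f \<le> pbar j i / f i"
  unfolding qmin_def using finite_price_ratios by (intro Min_le) auto

lemma le_qmax: "pbar j i / f i \<le> qmax pbar f"
  unfolding qmax_def using finite_price_ratios by (intro Max_ge) auto

lemma qmin_pos:
  assumes "\<forall>j i. 0 < pbar j i" and "\<forall>i. 0 < f i"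
  shows "0 < qmin pbar f"
  unfolding qmin_def using finite_price_ratios assms by (subst Min_gr_iff) auto

lemma qmin_le_qmax: "qmin pbar f \<le> qmax pbar f"
  using qmin_le le_qmax by (rule order_trans)

lemma beta_nonneg:
  assumes "0 < qmin pbar f"
  shows "0 \<le> beta pbar f"
  unfolding beta_def using assms qmin_le_qmax[of pbar f] by simp

lemma scaled_tail_le_Rfac:
  fixes \<theta> :: "'j::finite \<Rightarrow> real" and a b :: "'i::finite \<Rightarrow> 'j \<Rightarrow> real"
    and pbar :: "'j \<Rightarrow> 'i \<Rightarrow> real" and f :: "'i \<Rightarrow> real"
  assumes "\<forall>j. 0 \<le> \<theta> j" and "\<forall>i j. 0 < b i j" and "\<forall>i. 0 < f i"
    and "\<forall>j. (\<Sum>i\<in>UNIV. demand a b (pbar j) i j * f i) \<le> (MIN i. f i)"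
    and bdd: "bdd_above {revtot \<theta> a b p | p. \<forall>i. 0 \<le> p i}" and "0 < q"
  shows "q * (\<Sum>j\<in>UNIV. \<theta> j * (\<Sum>i | q * f i \<le> pbar j i. f i * demand a b (pbar j) i j))
    \<le> Rfac \<theta> a b f"
proof -
  have "q * (\<Sum>j\<in>UNIV. \<theta> j * (\<Sum>i | q * f i \<le> pbar j i. f i * demand a b (pbar j) i j))
      = (\<Sum>j\<in>UNIV. \<theta> j * (q * (\<Sum>i | q * f i \<le> pbar j i. f i * demand a b (pbar j) i j)))"
    by (simp add: sum_distrib_left mult.left_commute)
  also have "\<dots> \<le> (\<Sum>j\<in>UNIV. \<theta> j * revj a b j (\<lambda>i. q * f i))"
    using assms by (intro sum_mono mult_left_mono revj_scaled_ge_cheaper_demand) auto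
  also have "\<dots> \<le> Rfac \<theta> a b f"
    using revtot_scaled_le_Rfac[OF bdd _ \<open>0 < q\<close>] assms(3) by (simp add: revtot_def less_imp_le)
  finally show ?thesis .
qed

lemma Rbar_le_beta_Rfac:
  fixes \<theta> :: "'j::finite \<Rightarrow> real" and a b :: "'i::finite \<Rightarrow> 'j \<Rightarrow> real"
    and pbar :: "'j \<Rightarrow> 'i \<Rightarrow> real" and f :: "'i \<Rightarrow> real"
  assumes theta_nonneg: "\<forall>j. 0 \<le> \<theta> j" and b_pos: "\<forall>i j. 0 < b i j"
    and pbar_pos: "\<forall>j i. 0 < pbar j i"
    and pbar_opt: "\<forall>j p. (\<forall>i. 0 \<le> p i) \<longrightarrow> revj a b j p \<le> revj a b j (pbar j)"
    and f_pos: "\<forall>i. 0 < f i"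
    and demand_f: "\<forall>j. (\<Sum>i\<in>UNIV. demand a b (pbar j) i j * f i) \<le> (MIN i. f i)"
  shows "Rbar \<theta> a b pbar \<le> beta pbar f * Rfac \<theta> a b f"
proof -
  define w where "w = (\<lambda>(j, i). \<theta> j * (f i * demand a b (pbar j) i j))"
  define t where "t = (\<lambda>(j, i). pbar j i / f i)"
  note bdd = bdd_above_revtot[OF theta_nonneg pbar_opt]
  have tail: "q * (\<Sum>k\<in>{k\<in>UNIV \<times> UNIV. q \<le> t k}. w k) \<le> Rfac \<theta> a b f" if "0 < q" for q
  proof -
    have "(\<Sum>k\<in>{k\<in>UNIV \<times> UNIV. q \<le> t k}. w k)
        = (\<Sum>(j, i)\<in>UNIV \<times> UNIV. if q * f i \<le> pbar j i then w (j, i) else 0)"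
      using f_pos by (simp add: sum.If_cases t_def le_divide_eq case_prod_unfold mult.commute)
    also have "\<dots> = (\<Sum>j\<in>UNIV. \<Sum>i\<in>UNIV. if q * f i \<le> pbar j i then w (j, i) else 0)"
      by (rule sum.cartesian_product[symmetric])
    also have "\<dots> = (\<Sum>j\<in>UNIV. \<theta> j * (\<Sum>i | q * f i \<le> pbar j i. f i * demand a b (pbar j) i j))"
      by (simp add: sum.If_cases sum_distrib_left w_def)
    finally show ?thesis
      using scaled_tail_le_Rfac[OF theta_nonneg b_pos f_pos demand_f bdd \<open>0 < q\<close>] by simp
  qed
  have "Rbar \<theta> a b pbar = (\<Sum>j\<in>UNIV. \<Sum>i\<in>UNIV. w (j, i) * t (j, i))"
  proof -
    have "w (j, i) * t (j, i) = \<theta> j * (pbar j i * demand a b (pbar j) i j)" for j i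
      using f_pos[rule_format, of i] by (simp add: w_def t_def)
    then show ?thesis
      by (simp add: Rbar_def revj_def sum_distrib_left)
  qed
  also have "\<dots> = (\<Sum>k\<in>UNIV \<times> UNIV. w k * t k)"
    unfolding sum.cartesian_product by simp
  also have "\<dots> \<le> Rfac \<theta> a b f * (1 + ln (qmax pbar f / qmin pbar f))"
    using qmin_pos[OF pbar_pos f_pos] qmin_le_qmax qmin_le le_qmax
    by (intro layer_cake_log_bound tail) (auto simp: t_def)
  finally show ?thesis
    by (simp add: beta_def mult.commute)
qed

lemma Rbar_le_beta_Rfac_le_beta_Ropt:
  fixes \<theta> :: "'j::finite \<Rightarrow> real" and a b :: "'i::finite \<Rightarrow> 'j \<Rightarrow> real"
    and pbar :: "'j \<Rightarrow> 'i \<Rightarrow> real" and f :: "'i \<Rightarrow> real"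
  assumes theta_nonneg: "\<forall>j. 0 \<le> \<theta> j" and b_pos: "\<forall>i j. 0 < b i j"
    and pbar_pos: "\<forall>j i. 0 < pbar j i"
    and pbar_opt: "\<forall>j p. (\<forall>i. 0 \<le> p i) \<longrightarrow> revj a b j p \<le> revj a b j (pbar j)"
    and f_pos: "\<forall>i. 0 < f i"
    and demand_f: "\<forall>j. (\<Sum>i\<in>UNIV. demand a b (pbar j) i j * f i) \<le> (MIN i. f i)"
  shows "Rbar \<theta> a b pbar \<le> beta pbar f * Rfac \<theta> a b f
    \<and> beta pbar f * Rfac \<theta> a b f \<le> beta pbar f * Ropt \<theta> a b"
proof
  show "Rbar \<theta> a b pbar \<le> beta pbar f * Rfac \<theta> a b f"
    using Rbar_le_beta_Rfac[OF assms] .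
  have "Rfac \<theta> a b f \<le> Ropt \<theta> a b"
    using Rfac_le_Ropt[OF bdd_above_revtot[OF theta_nonneg pbar_opt]] f_pos by (simp add: less_imp_le)
  then show "beta pbar f * Rfac \<theta> a b f \<le> beta pbar f * Ropt \<theta> a b"
    using beta_nonneg[OF qmin_pos[OF pbar_pos f_pos]] by (rule mult_left_mono)
qed

lemma factors_constant_if_uniform_sensitivity:
  fixes \<theta> :: "'j::finite \<Rightarrow> real" and a b :: "'i::finite \<Rightarrow> 'j \<Rightarrow> real"
    and pbar :: "'j \<Rightarrow> 'i \<Rightarrow> real"
  assumes "\<forall>i j. 0 < b i j" and "\<forall>j. \<forall>i k. b i j = b k j"
    and "\<forall>j i. 0 < pbar j i"
    and "\<forall>j p. (\<forall>i. 0 \<le> p i) \<longrightarrow> revj a b j p \<le> revj a b j (pbar j)"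
  shows "(\<exists>c. \<forall>i. econ_factor \<theta> a b pbar i = c) \<and> (\<exists>c. \<forall>i. robust_factor pbar i = c)"
proof -
  fix i0 :: 'i
  have pbar_const: "pbar j i = pbar j i0" for i j
    using assms by (intro optimal_prices_eq_if_uniform_sensitivity[where a = a and b = b and j = j]) auto
  have "econ_factor \<theta> a b pbar i = econ_factor \<theta> a b pbar i0"
    and "robust_factor pbar i = robust_factor pbar i0" for i
    unfolding econ_factor_def robust_factor_def by (simp_all add: pbar_const[of _ i])
  then show ?thesis
    by blast
qed

theorem corollary3:
  fixes \<theta> :: "'j::finite \<Rightarrow> real"
    and a b :: "'i::finite \<Rightarrow> 'j \<Rightarrow> real"
    and pbar :: "'j \<Rightarrow> 'i \<Rightarrow> real"
  assumes theta_pos: "\<forall>j. 0 < \<theta> j"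
    and theta_sum: "(\<Sum>j\<in>UNIV. \<theta> j) = 1"
    and b_pos: "\<forall>i j. 0 < b i j"
    and pbar_pos: "\<forall>j i. 0 < pbar j i"
    and pbar_opt: "\<forall>j p. (\<forall>i. 0 \<le> p i) \<longrightarrow> revj a b j p \<le> revj a b j (pbar j)"
  shows
    "(Rbar \<theta> a b pbar \<le> beta pbar (\<lambda>_. 1) * Rfac \<theta> a b (\<lambda>_. 1)
      \<and> beta pbar (\<lambda>_. 1) * Rfac \<theta> a b (\<lambda>_. 1) \<le> beta pbar (\<lambda>_. 1) * Ropt \<theta> a b)
     \<and> ((\<forall>j. \<forall>i k. b i j = b k j) \<longrightarrow>
          (\<exists>c. \<forall>i. econ_factor \<theta> a b pbar i = c) \<and> (\<exists>c. \<forall>i. robust_factor pbar i = c))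
     \<and> (\<forall>f :: 'i \<Rightarrow> real. (\<forall>i. 0 < f i) \<longrightarrow>
          (\<forall>j. (\<Sum>i\<in>UNIV. demand a b (pbar j) i j * f i) \<le> (MIN i. f i)) \<longrightarrow>
          Rbar \<theta> a b pbar \<le> beta pbar f * Rfac \<theta> a b f
          \<and> beta pbar f * Rfac \<theta> a b f \<le> beta pbar f * Ropt \<theta> a b)"
proof -
  have theta_nonneg: "\<forall>j. 0 \<le> \<theta> j"
    using theta_pos by (simp add: less_imp_le)
  note iii = Rbar_le_beta_Rfac_le_beta_Ropt[OF theta_nonneg b_pos pbar_pos pbar_opt]
  have "\<forall>j. (\<Sum>i\<in>UNIV. demand a b (pbar j) i j * 1) \<le> (MIN i::'i. 1::real)"
    by (simp add: sum_demand_le_1)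
  then have i: "Rbar \<theta> a b pbar \<le> beta pbar (\<lambda>_. 1) * Rfac \<theta> a b (\<lambda>_. 1)
      \<and> beta pbar (\<lambda>_. 1) * Rfac \<theta> a b (\<lambda>_. 1) \<le> beta pbar (\<lambda>_. 1) * Ropt \<theta> a b"
    by (intro iii) simp_all
  show ?thesis
    using i iii factors_constant_if_uniform_sensitivity[OF b_pos _ pbar_pos pbar_opt]
    by (intro conjI impI allI) simp_all
qed

end
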